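(* Let $\mathcal{C}$ be a hereditary class of graphs that has bounded linear clique-width and is $2$-well-quasi-ordered. Then there exists an MSO-interpretation $I$ from finite words to graphs such that $\mathcal{C}\subseteq \mathrm{Im}(I)\subseteq \mathord{\downarrow}\mathcal{C}$, where $\mathord{\downarrow}\mathcal{C}$ denotes the hereditary closure of $\mathcal{C}$.
   Context: Graphs are finite, simple and undirected; $G$ is an induced subgraph of $H$ if there is an injective map $h$ with $\{h(u),h(v)\}\in E(H)$ iff $\{u,v\}\in E(G)$. A class is hereditary if closed under induced subgraphs; the hereditary closure of a class is the class of all induced subgraphs of its members. An MSO-interpretation from words over a finite alphabet $\Sigma$ to graphs is a triple $I=(\varphi_{\mathrm{edge}}(x,y),\varphi_{\mathrm{dom}}(x),\varphi_\Delta)$ of MSO formulas over words (with letter predicates and the order on positions), $\varphi_\Delta$ a sentence. For a word $w$, $I(w)$ is the graph with vertices the positions $i$ of $w$ with $w\models\varphi_{\mathrm{dom}}(i)$ and edges $\{i,j\}$ for $i<j$ with $w\models\varphi_{\mathrm{edge}}(i,j)$; $\mathrm{Im}(I)=\{I(w): w\in\Sigma^*, w\models\varphi_\Delta\}$. A class $\mathcal{C}$ has bounded linear clique-width if $\mathcal{C}\subseteq\mathrm{Im}(I)$ for some MSO-interpretation $I$. A class is $2$-well-quasi-ordered if for every set $X$ of size at most $2$, the class of graphs of $\mathcal{C}$ with vertices labelled by $X$ is well-quasi-ordered by label-preserving induced-subgraph embeddings. *)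

theory Defs
  imports Main
begin

type_synonym graph = "nat set \<times> nat set set"

definition is_graph :: "graph \<Rightarrow> bool" where
  "is_graph G \<longleftrightarrow> finite (fst G) \<and>
     (\<forall>e\<in>snd G. \<exists>u v. u \<noteq> v \<and> u \<in> fst G \<and> v \<in> fst G \<and> e = {u, v})"

definition induced_sub :: "graph \<Rightarrow> graph \<Rightarrow> bool" where
  "induced_sub G H \<longleftrightarrow> (\<exists>h. inj_on h (fst G) \<and> h ` fst G \<subseteq> fst H \<and>
     (\<forall>u\<in>fst G. \<forall>v\<in>fst G. ({h u, h v} \<in> snd H \<longleftrightarrow> {u, v} \<in> snd G)))"

definition graph_iso :: "graph \<Rightarrow> graph \<Rightarrow> bool" where
  "graph_iso G H \<longleftrightarrow> (\<exists>h. bij_betw h (fst G) (fst H) \<and>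
     (\<forall>u\<in>fst G. \<forall>v\<in>fst G. ({h u, h v} \<in> snd H \<longleftrightarrow> {u, v} \<in> snd G)))"

definition hereditary :: "graph set \<Rightarrow> bool" where
  "hereditary C \<longleftrightarrow> (\<forall>H\<in>C. \<forall>G. is_graph G \<and> induced_sub G H \<longrightarrow> G \<in> C)"

definition hered_closure :: "graph set \<Rightarrow> graph set" where
  "hered_closure C = {G. is_graph G \<and> (\<exists>H\<in>C. induced_sub G H)}"

text \<open>A labelled graph is a graph with a labelling of its vertices (only the
values on the vertex set matter).\<close>
definition lab_embed :: "graph \<times> (nat \<Rightarrow> nat) \<Rightarrow> graph \<times> (nat \<Rightarrow> nat) \<Rightarrow> bool" where
  "lab_embed Gl Hm \<longleftrightarrow> (case Gl of (G, l) \<Rightarrow> case Hm of (H, m) \<Rightarrow>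
     (\<exists>h. inj_on h (fst G) \<and> h ` fst G \<subseteq> fst H \<and>
       (\<forall>u\<in>fst G. \<forall>v\<in>fst G. ({h u, h v} \<in> snd H \<longleftrightarrow> {u, v} \<in> snd G)) \<and>
       (\<forall>v\<in>fst G. m (h v) = l v)))"

definition wqo_on :: "('a \<Rightarrow> 'a \<Rightarrow> bool) \<Rightarrow> 'a set \<Rightarrow> bool" where
  "wqo_on P A \<longleftrightarrow> (\<forall>x\<in>A. P x x) \<and>
     (\<forall>x\<in>A. \<forall>y\<in>A. \<forall>z\<in>A. P x y \<longrightarrow> P y z \<longrightarrow> P x z) \<and>
     (\<forall>f::nat \<Rightarrow> 'a. (\<forall>i. f i \<in> A) \<longrightarrow> (\<exists>i j. i < j \<and> P (f i) (f j)))"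

definition labelled_class :: "graph set \<Rightarrow> nat set \<Rightarrow> (graph \<times> (nat \<Rightarrow> nat)) set" where
  "labelled_class C X = {(G, l). G \<in> C \<and> l ` fst G \<subseteq> X}"

definition k_wqo :: "nat \<Rightarrow> graph set \<Rightarrow> bool" where
  "k_wqo k C \<longleftrightarrow> (\<forall>X::nat set. finite X \<and> card X \<le> k \<longrightarrow>
     wqo_on lab_embed (labelled_class C X))"

text \<open>First-order variables and set variables are named by natural numbers
(separate name spaces). Positions of a word w are 0..length w - 1.\<close>
datatype 'a mso =
    Letter 'a nat
  | Less nat nat
  | Eq nat nat
  | Mem nat nat
  | Neg "'a mso"
  | Disj "'a mso" "'a mso"
  | Ex1 nat "'a mso"
  | Ex2 nat "'a mso"

fun sat :: "'a list \<Rightarrow> (nat \<Rightarrow> nat) \<Rightarrow> (nat \<Rightarrow> nat set) \<Rightarrow> 'a mso \<Rightarrow> bool" where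
  "sat w fe se (Letter a x) \<longleftrightarrow> fe x < length w \<and> w ! (fe x) = a"
| "sat w fe se (Less x y) \<longleftrightarrow> fe x < fe y"
| "sat w fe se (Eq x y) \<longleftrightarrow> fe x = fe y"
| "sat w fe se (Mem x X) \<longleftrightarrow> fe x \<in> se X"
| "sat w fe se (Neg \<phi>) \<longleftrightarrow> \<not> sat w fe se \<phi>"
| "sat w fe se (Disj \<phi> \<psi>) \<longleftrightarrow> sat w fe se \<phi> \<or> sat w fe se \<psi>"
| "sat w fe se (Ex1 x \<phi>) \<longleftrightarrow> (\<exists>i < length w. sat w (fe(x := i)) se \<phi>)"
| "sat w fe se (Ex2 X \<phi>) \<longleftrightarrow> (\<exists>S \<subseteq> {..<length w}. sat w fe (se(X := S)) \<phi>)"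

fun fv1 :: "'a mso \<Rightarrow> nat set" where
  "fv1 (Letter a x) = {x}"
| "fv1 (Less x y) = {x, y}"
| "fv1 (Eq x y) = {x, y}"
| "fv1 (Mem x X) = {x}"
| "fv1 (Neg \<phi>) = fv1 \<phi>"
| "fv1 (Disj \<phi> \<psi>) = fv1 \<phi> \<union> fv1 \<psi>"
| "fv1 (Ex1 x \<phi>) = fv1 \<phi> - {x}"
| "fv1 (Ex2 X \<phi>) = fv1 \<phi>"

fun fv2 :: "'a mso \<Rightarrow> nat set" where
  "fv2 (Letter a x) = {}"
| "fv2 (Less x y) = {}"
| "fv2 (Eq x y) = {}"
| "fv2 (Mem x X) = {X}"
| "fv2 (Neg \<phi>) = fv2 \<phi>"
| "fv2 (Disj \<phi> \<psi>) = fv2 \<phi> \<union> fv2 \<psi>"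
| "fv2 (Ex1 x \<phi>) = fv2 \<phi>"
| "fv2 (Ex2 X \<phi>) = fv2 \<phi> - {X}"

record mso_interp =
  alph :: "nat set"
  phi_edge :: "nat mso"
  phi_dom :: "nat mso"
  phi_Delta :: "nat mso"

definition wf_interp :: "mso_interp \<Rightarrow> bool" where
  "wf_interp I \<longleftrightarrow> finite (alph I) \<and>
     fv1 (phi_edge I) \<subseteq> {0, 1} \<and> fv2 (phi_edge I) = {} \<and>
     fv1 (phi_dom I) \<subseteq> {0} \<and> fv2 (phi_dom I) = {} \<and>
     fv1 (phi_Delta I) = {} \<and> fv2 (phi_Delta I) = {}"

definition interp_verts :: "mso_interp \<Rightarrow> nat list \<Rightarrow> nat set" where
  "interp_verts I w = {i. i < length w \<and> sat w ((\<lambda>_. 0)(0 := i)) (\<lambda>_. {}) (phi_dom I)}"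

definition apply_interp :: "mso_interp \<Rightarrow> nat list \<Rightarrow> graph" where
  "apply_interp I w = (interp_verts I w,
     {{i, j} | i j. i < j \<and> i \<in> interp_verts I w \<and> j \<in> interp_verts I w \<and>
        sat w ((\<lambda>_. 0)(0 := i, 1 := j)) (\<lambda>_. {}) (phi_edge I)})"

definition Im :: "mso_interp \<Rightarrow> graph set" where
  "Im I = {apply_interp I w | w. w \<in> lists (alph I) \<and> sat w (\<lambda>_. 0) (\<lambda>_. {}) (phi_Delta I)}"

definition subclass_iso :: "graph set \<Rightarrow> graph set \<Rightarrow> bool" where
  "subclass_iso C D \<longleftrightarrow> (\<forall>G\<in>C. \<exists>H\<in>D. graph_iso G H)"

definition bounded_lcw :: "graph set \<Rightarrow> bool" where
  "bounded_lcw C \<longleftrightarrow> (\<exists>I. wf_interp I \<and> subclass_iso C (Im I))"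

end

theory Submission
  imports Defs
begin

text \<open>A class is determined by its minimal obstructions, the graphs outside it all of whose
  proper induced subgraphs lie inside. For a 2-wqo class there are finitely many of them up to
  embedding: deleting a vertex \<open>v\<close> from a minimal obstruction leaves a member of the class, and
  labelling the remaining vertices by adjacency to \<open>v\<close> makes every labelled embedding of the
  vertex-deleted graphs extend to an embedding of the obstructions, so an infinite antichain of
  obstructions would yield a bad sequence of 2-labelled members. Containing a fixed finite graph
  as an induced subgraph is MSO-definable over the interpreted graph, so conjoining the negated
  containment sentences of these finitely many obstructions to the domain sentence of an
  interpretation witnessing bounded linear clique-width cuts its image down to members of the
  hereditary class, while keeping copies of all of them.\<close>

section \<open>Induced subgraphs\<close>

lemma induced_sub_refl: "induced_sub G G"
  unfolding induced_sub_def by (intro exI[of _ id]) auto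

lemma induced_sub_trans:
  assumes "induced_sub A B" and "induced_sub B C"
  shows "induced_sub A C"
proof -
  obtain h where h: "inj_on h (fst A)" "h ` fst A \<subseteq> fst B"
    "\<forall>u\<in>fst A. \<forall>v\<in>fst A. {h u, h v} \<in> snd B \<longleftrightarrow> {u, v} \<in> snd A"
    using assms(1) unfolding induced_sub_def by blast
  obtain g where g: "inj_on g (fst B)" "g ` fst B \<subseteq> fst C"
    "\<forall>u\<in>fst B. \<forall>v\<in>fst B. {g u, g v} \<in> snd C \<longleftrightarrow> {u, v} \<in> snd B"
    using assms(2) unfolding induced_sub_def by blast
  have "inj_on (g \<circ> h) (fst A)" using h g by (auto intro: comp_inj_on inj_on_subset)
  moreover have "(g \<circ> h) ` fst A \<subseteq> fst C" using h g by (auto simp: image_subset_iff)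
  moreover have "{g (h u), g (h v)} \<in> snd C \<longleftrightarrow> {u, v} \<in> snd A" if "u \<in> fst A" "v \<in> fst A" for u v
    using h g that by blast
  ultimately show ?thesis unfolding induced_sub_def by (intro exI[of _ "g \<circ> h"]) simp
qed

lemma induced_sub_empty: "fst G = {} \<Longrightarrow> induced_sub G H"
  unfolding induced_sub_def by auto

lemma graph_iso_imp_induced_sub:
  assumes "graph_iso G H"
  shows "induced_sub H G"
proof -
  obtain h where h: "bij_betw h (fst G) (fst H)"
    and e: "\<forall>u\<in>fst G. \<forall>v\<in>fst G. {h u, h v} \<in> snd H \<longleftrightarrow> {u, v} \<in> snd G"
    using assms unfolding graph_iso_def by blast
  let ?g = "inv_into (fst G) h"
  have g: "bij_betw ?g (fst H) (fst G)" using h by (rule bij_betw_inv_into)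
  have "{?g u, ?g v} \<in> snd G \<longleftrightarrow> {u, v} \<in> snd H" if "u \<in> fst H" "v \<in> fst H" for u v
    using e that bij_betw_apply[OF g] bij_betw_inv_into_right[OF h] by metis
  then show ?thesis using g unfolding induced_sub_def bij_betw_def by blast
qed

lemma is_graph_no_loop: "is_graph G \<Longrightarrow> {u} \<notin> snd G"
  unfolding is_graph_def by (auto simp: doubleton_eq_iff)

lemma induced_sub_iff_injective_on_pairs:
  assumes "is_graph G" and "is_graph H"
  shows "induced_sub G H \<longleftrightarrow> (\<exists>h. (\<forall>v\<in>fst G. h v \<in> fst H) \<and>
    (\<forall>u\<in>fst G. \<forall>v\<in>fst G. u \<noteq> v \<longrightarrow> h u \<noteq> h v \<and> ({h u, h v} \<in> snd H \<longleftrightarrow> {u, v} \<in> snd G)))"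
  (is "_ \<longleftrightarrow> (\<exists>h. ?map h)")
proof
  assume "induced_sub G H"
  then obtain h where "inj_on h (fst G)" "h ` fst G \<subseteq> fst H"
    "\<forall>u\<in>fst G. \<forall>v\<in>fst G. {h u, h v} \<in> snd H \<longleftrightarrow> {u, v} \<in> snd G"
    unfolding induced_sub_def by blast
  then have "?map h" by (auto simp: inj_on_def)
  then show "\<exists>h. ?map h" by blast
next
  assume "\<exists>h. ?map h"
  then obtain h where h: "?map h" ..
  then have "inj_on h (fst G)" "h ` fst G \<subseteq> fst H" by (auto simp: inj_on_def)
  moreover have "{h u, h v} \<in> snd H \<longleftrightarrow> {u, v} \<in> snd G" if "u \<in> fst G" "v \<in> fst G" for u v
    using h that is_graph_no_loop[OF assms(1)] is_graph_no_loop[OF assms(2)]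
    by (cases "u = v") auto
  ultimately show "induced_sub G H" unfolding induced_sub_def by blast
qed

definition delete_vertex :: "graph \<Rightarrow> nat \<Rightarrow> graph" where
  "delete_vertex G v = (fst G - {v}, {e \<in> snd G. v \<notin> e})"

lemma
  assumes "is_graph G" and "v \<in> fst G"
  shows is_graph_delete_vertex: "is_graph (delete_vertex G v)"
    and induced_sub_delete_vertex: "induced_sub (delete_vertex G v) G"
    and card_delete_vertex: "card (fst (delete_vertex G v)) < card (fst G)"
proof -
  show "is_graph (delete_vertex G v)" using assms unfolding is_graph_def delete_vertex_def by fastforce
  show "induced_sub (delete_vertex G v) G"
    unfolding induced_sub_def delete_vertex_def by (intro exI[of _ id]) auto
  show "card (fst (delete_vertex G v)) < card (fst G)"
    using assms card_gt_0_iff[of "fst G"] by (auto simp: is_graph_def delete_vertex_def)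
qed

definition nbr_label :: "graph \<Rightarrow> nat \<Rightarrow> nat \<Rightarrow> nat" where
  "nbr_label G v u = (if {u, v} \<in> snd G then 1 else 0)"

lemma induced_sub_if_lab_embed_delete_vertex:
  assumes G: "is_graph G" and H: "is_graph H" and v: "v \<in> fst G" and w: "w \<in> fst H"
    and emb: "lab_embed (delete_vertex G v, nbr_label G v) (delete_vertex H w, nbr_label H w)"
  shows "induced_sub G H"
proof -
  obtain h where h_inj: "inj_on h (fst G - {v})" and h_img: "h ` (fst G - {v}) \<subseteq> fst H - {w}"
    and h_edge': "\<forall>x\<in>fst G - {v}. \<forall>y\<in>fst G - {v}.
        {h x, h y} \<in> {e \<in> snd H. w \<notin> e} \<longleftrightarrow> {x, y} \<in> {e \<in> snd G. v \<notin> e}"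
    and h_lab: "\<forall>x\<in>fst G - {v}. nbr_label H w (h x) = nbr_label G v x"
    using emb unfolding lab_embed_def delete_vertex_def by auto
  have h_edge: "{h x, h y} \<in> snd H \<longleftrightarrow> {x, y} \<in> snd G" if "x \<in> fst G - {v}" "y \<in> fst G - {v}" for x y
    using h_edge' h_img that by blast
  have h_nbr: "{h x, w} \<in> snd H \<longleftrightarrow> {x, v} \<in> snd G" if "x \<in> fst G - {v}" for x
    using h_lab that unfolding nbr_label_def by (auto split: if_splits)
  define h' where "h' = h(v := w)"
  have "inj_on h' (fst G)"
    using h_inj h_img unfolding h'_def by (auto simp: inj_on_def)
  moreover have "h' ` fst G \<subseteq> fst H" using h_img v w by (auto simp: h'_def)
  moreover have "{h' x, h' y} \<in> snd H \<longleftrightarrow> {x, y} \<in> snd G" if "x \<in> fst G" "y \<in> fst G" for x y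
    using that h_img h_edge h_nbr is_graph_no_loop[OF G] is_graph_no_loop[OF H]
    by (cases "x = v"; cases "y = v") (auto simp: h'_def insert_commute)
  ultimately show ?thesis unfolding induced_sub_def by blast
qed

section \<open>Finitely many minimal obstructions\<close>

lemma finite_basis_if_every_sequence_good:
  fixes A :: "'a set"
  assumes good: "\<And>f :: nat \<Rightarrow> 'a. \<forall>i. f i \<in> A \<Longrightarrow> \<exists>i j. i < j \<and> P (f i) (f j)"
  shows "\<exists>xs. set xs \<subseteq> A \<and> (\<forall>a\<in>A. \<exists>x\<in>set xs. P x a)"
proof (rule ccontr)
  assume "\<nexists>xs. set xs \<subseteq> A \<and> (\<forall>a\<in>A. \<exists>x\<in>set xs. P x a)"
  then have extend: "\<exists>a. a \<in> A \<and> (\<forall>x\<in>set xs. \<not> P x a)" if "set xs \<subseteq> A" for xs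
    using that by blast
  define step where "step xs = (SOME a. a \<in> A \<and> (\<forall>x\<in>set xs. \<not> P x a))" for xs
  have step: "step xs \<in> A \<and> (\<forall>x\<in>set xs. \<not> P x (step xs))" if "set xs \<subseteq> A" for xs
    unfolding step_def by (rule someI_ex) (rule extend[OF that])
  define L where "L = rec_nat [] (\<lambda>_ xs. xs @ [step xs])"
  define f where "f n = step (L n)" for n
  have L: "L n = map f [0..<n]" for n
    by (induction n) (simp_all add: L_def f_def)
  have f_bad: "f n \<in> A \<and> (\<forall>i<n. \<not> P (f i) (f n))" for n
  proof (induction n rule: less_induct)
    case (less n)
    have L_set: "set (L n) = f ` {..<n}" by (simp add: L atLeast0LessThan)
    have "set (L n) \<subseteq> A" unfolding L_set using less.IH by (simp add: image_subset_iff)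
    from step[OF this] show ?case unfolding f_def[of n, symmetric] L_set by simp
  qed
  then show False using good[of f] by blast
qed

definition min_obstructions :: "graph set \<Rightarrow> graph set" where
  "min_obstructions C = {F. is_graph F \<and> F \<notin> C \<and>
     (\<forall>G. is_graph G \<and> induced_sub G F \<and> card (fst G) < card (fst F) \<longrightarrow> G \<in> C)}"

lemma min_obstruction_below:
  assumes "is_graph G" and "G \<notin> C"
  shows "\<exists>F\<in>min_obstructions C. induced_sub F G"
  using assms
proof (induction "card (fst G)" arbitrary: G rule: less_induct)
  case less
  show ?case
  proof (cases "G \<in> min_obstructions C")
    case True
    then show ?thesis using induced_sub_refl by blast
  next
    case False
    then obtain H where "is_graph H" "induced_sub H G" "card (fst H) < card (fst G)" "H \<notin> C"
      using less.prems unfolding min_obstructions_def by blast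
    then show ?thesis using less.hyps induced_sub_trans by blast
  qed
qed

lemma delete_vertex_min_obstruction:
  assumes "F \<in> min_obstructions C" and "v \<in> fst F"
  shows "delete_vertex F v \<in> C"
  using assms is_graph_delete_vertex induced_sub_delete_vertex card_delete_vertex
  unfolding min_obstructions_def by blast

lemma min_obstructions_good:
  fixes f :: "nat \<Rightarrow> graph"
  assumes wqo: "k_wqo 2 C" and f: "\<forall>i. f i \<in> min_obstructions C"
  shows "\<exists>i j. i < j \<and> induced_sub (f i) (f j)"
proof (cases "\<exists>i. fst (f i) = {}")
  case True
  then obtain i where "fst (f i) = {}" by blast
  then show ?thesis using induced_sub_empty lessI by blast
next
  case False
  define v where "v i = (SOME x. x \<in> fst (f i))" for i
  have v: "v i \<in> fst (f i)" for i
    using False unfolding v_def by (simp add: some_in_eq)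
  have f_graph: "is_graph (f i)" for i
    using f unfolding min_obstructions_def by blast
  define g where "g i = (delete_vertex (f i) (v i), nbr_label (f i) (v i))" for i
  have "g i \<in> labelled_class C {0, 1}" for i
  proof -
    have "delete_vertex (f i) (v i) \<in> C"
      using delete_vertex_min_obstruction f v by blast
    moreover have "nbr_label (f i) (v i) ` X \<subseteq> {0, 1}" for X
      by (auto simp: nbr_label_def)
    ultimately show ?thesis by (simp add: g_def labelled_class_def)
  qed
  moreover have "wqo_on lab_embed (labelled_class C {0, 1})"
    using wqo unfolding k_wqo_def by simp
  ultimately obtain i j where ij: "i < j" "lab_embed (g i) (g j)"
    unfolding wqo_on_def by blast
  then show ?thesis
    using induced_sub_if_lab_embed_delete_vertex[OF f_graph f_graph v v] unfolding g_def by blast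
qed

lemma finite_obstruction_list:
  assumes "k_wqo 2 C"
  shows "\<exists>Fs. (\<forall>F\<in>set Fs. is_graph F \<and> F \<notin> C) \<and>
     (\<forall>G. is_graph G \<and> G \<notin> C \<longrightarrow> (\<exists>F\<in>set Fs. induced_sub F G))"
proof -
  have "\<exists>Fs. set Fs \<subseteq> min_obstructions C \<and>
      (\<forall>F\<in>min_obstructions C. \<exists>F'\<in>set Fs. induced_sub F' F)"
    by (rule finite_basis_if_every_sequence_good) (erule min_obstructions_good[OF assms])
  then obtain Fs where Fs_sub: "set Fs \<subseteq> min_obstructions C"
    and Fs_basis: "\<forall>F\<in>min_obstructions C. \<exists>F'\<in>set Fs. induced_sub F' F"
    by blast
  have "\<exists>F'\<in>set Fs. induced_sub F' G" if G: "is_graph G" "G \<notin> C" for G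
  proof -
    obtain F where F: "F \<in> min_obstructions C" and FG: "induced_sub F G"
      using min_obstruction_below[OF G] by blast
    obtain F' where "F' \<in> set Fs" "induced_sub F' F"
      using Fs_basis F by blast
    then show ?thesis using induced_sub_trans[OF _ FG] by blast
  qed
  moreover have "\<forall>F\<in>set Fs. is_graph F \<and> F \<notin> C"
    using Fs_sub unfolding min_obstructions_def by blast
  ultimately show ?thesis by blast
qed

section \<open>MSO-definability of containing an induced subgraph\<close>

lemma is_graph_apply_interp: "is_graph (apply_interp I w)"
proof -
  have "fst (apply_interp I w) \<subseteq> {..<length w}"
    by (auto simp: apply_interp_def interp_verts_def)
  then have "finite (fst (apply_interp I w))" using finite_subset by blast
  then show ?thesis unfolding is_graph_def by (auto simp: apply_interp_def) (metis less_irrefl_nat)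
qed

lemma is_graph_Im: "H \<in> Im I \<Longrightarrow> is_graph H"
  using is_graph_apply_interp unfolding Im_def by blast

lemma edge_apply_interp_iff:
  assumes "p \<in> interp_verts I w" and "q \<in> interp_verts I w"
  shows "{p, q} \<in> snd (apply_interp I w) \<longleftrightarrow>
    (p < q \<and> sat w ((\<lambda>_. 0)(0 := p, 1 := q)) (\<lambda>_. {}) (phi_edge I)) \<or>
    (q < p \<and> sat w ((\<lambda>_. 0)(0 := q, 1 := p)) (\<lambda>_. {}) (phi_edge I))"
  using assms by (auto simp: apply_interp_def doubleton_eq_iff)

definition mso_true :: "'a mso" where
  "mso_true = Neg (Ex1 0 (Neg (Eq 0 0)))"

definition mso_and :: "'a mso \<Rightarrow> 'a mso \<Rightarrow> 'a mso" where
  "mso_and \<phi> \<psi> = Neg (Disj (Neg \<phi>) (Neg \<psi>))"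

fun mso_conj :: "'a mso list \<Rightarrow> 'a mso" where
  "mso_conj [] = mso_true"
| "mso_conj (\<phi> # \<phi>s) = mso_and \<phi> (mso_conj \<phi>s)"

lemma sat_mso_true [simp]: "sat w fe se mso_true"
  by (simp add: mso_true_def)

lemma sat_mso_and [simp]: "sat w fe se (mso_and \<phi> \<psi>) \<longleftrightarrow> sat w fe se \<phi> \<and> sat w fe se \<psi>"
  by (simp add: mso_and_def)

lemma sat_mso_conj [simp]: "sat w fe se (mso_conj \<phi>s) \<longleftrightarrow> (\<forall>\<phi>\<in>set \<phi>s. sat w fe se \<phi>)"
  by (induction \<phi>s) (auto simp: mso_true_def)

lemma fv_mso_true [simp]: "fv1 mso_true = {}" "fv2 mso_true = {}"
  by (auto simp: mso_true_def)

lemma fv_mso_and [simp]: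
  "fv1 (mso_and \<phi> \<psi>) = fv1 \<phi> \<union> fv1 \<psi>" "fv2 (mso_and \<phi> \<psi>) = fv2 \<phi> \<union> fv2 \<psi>"
  by (auto simp: mso_and_def)

lemma fv_mso_conj [simp]:
  "fv1 (mso_conj \<phi>s) = (\<Union>\<phi>\<in>set \<phi>s. fv1 \<phi>)" "fv2 (mso_conj \<phi>s) = (\<Union>\<phi>\<in>set \<phi>s. fv2 \<phi>)"
  by (induction \<phi>s) auto

lemma sat_cong_free_vars:
  assumes "\<forall>x\<in>fv1 \<phi>. fe x = fe' x" and "\<forall>X\<in>fv2 \<phi>. se X = se' X"
  shows "sat w fe se \<phi> \<longleftrightarrow> sat w fe' se' \<phi>"
  using assms
proof (induction \<phi> arbitrary: fe fe' se se')
  case (Disj \<phi> \<psi>)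
  then have "sat w fe se \<phi> \<longleftrightarrow> sat w fe' se' \<phi>" and "sat w fe se \<psi> \<longleftrightarrow> sat w fe' se' \<psi>"
    by simp_all
  then show ?case by simp
next
  case (Ex1 x \<phi>)
  then have "sat w (fe(x := i)) se \<phi> \<longleftrightarrow> sat w (fe'(x := i)) se' \<phi>" for i by simp
  then show ?case by simp
next
  case (Ex2 X \<phi>)
  then have "sat w fe (se(X := S)) \<phi> \<longleftrightarrow> sat w fe' (se'(X := S)) \<phi>" for S by simp
  then show ?case by simp
qed auto

lemma sat_foldr_Ex1:
  "sat w fe se (foldr Ex1 xs \<phi>) \<longleftrightarrow>
    (\<exists>g. (\<forall>x\<in>set xs. g x < length w) \<and> sat w (override_on fe g (set xs)) se \<phi>)"
proof (induction xs arbitrary: fe)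
  case (Cons x xs)
  have "sat w fe se (foldr Ex1 (x # xs) \<phi>) \<longleftrightarrow>
      (\<exists>i<length w. \<exists>g. (\<forall>y\<in>set xs. g y < length w) \<and>
         sat w (override_on (fe(x := i)) g (set xs)) se \<phi>)"
    by (simp add: Cons.IH fun_upd_def)
  also have "\<dots> \<longleftrightarrow> (\<exists>g. (\<forall>y\<in>set (x # xs). g y < length w) \<and>
      sat w (override_on fe g (set (x # xs))) se \<phi>)"
  proof
    assume "\<exists>i<length w. \<exists>g. (\<forall>y\<in>set xs. g y < length w) \<and>
        sat w (override_on (fe(x := i)) g (set xs)) se \<phi>"
    then obtain i g where "i < length w" "\<forall>y\<in>set xs. g y < length w"
      "sat w (override_on (fe(x := i)) g (set xs)) se \<phi>" by blast
    moreover have "override_on (fe(x := i)) g (set xs) =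
        override_on fe (override_on (\<lambda>_. i) g (set xs)) (set (x # xs))"
      by (auto simp: override_on_def)
    ultimately show "\<exists>g. (\<forall>y\<in>set (x # xs). g y < length w) \<and>
        sat w (override_on fe g (set (x # xs))) se \<phi>"
      by (intro exI[of _ "override_on (\<lambda>_. i) g (set xs)"]) (auto simp: override_on_def)
  next
    assume "\<exists>g. (\<forall>y\<in>set (x # xs). g y < length w) \<and> sat w (override_on fe g (set (x # xs))) se \<phi>"
    then obtain g where "\<forall>y\<in>set (x # xs). g y < length w"
      "sat w (override_on fe g (set (x # xs))) se \<phi>" by blast
    moreover have "override_on fe g (set (x # xs)) = override_on (fe(x := g x)) g (set xs)"
      by (auto simp: override_on_def)
    ultimately show "\<exists>i<length w. \<exists>g. (\<forall>y\<in>set xs. g y < length w) \<and>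
        sat w (override_on (fe(x := i)) g (set xs)) se \<phi>"
      by auto
  qed
  finally show ?case .
qed simp

lemma fv_foldr_Ex1: "fv1 (foldr Ex1 xs \<phi>) = fv1 \<phi> - set xs" "fv2 (foldr Ex1 xs \<phi>) = fv2 \<phi>"
  by (induction xs) auto

text \<open>The formulas of an interpretation speak about the variables 0 and 1; rebinding these
  through equalities lets them speak about arbitrary variables \<open>x, y \<ge> 2\<close>.\<close>

definition mso_vertex :: "mso_interp \<Rightarrow> nat \<Rightarrow> nat mso" where
  "mso_vertex I x = Ex1 0 (mso_and (Eq 0 x) (phi_dom I))"

definition mso_edge_lt :: "mso_interp \<Rightarrow> nat \<Rightarrow> nat \<Rightarrow> nat mso" where
  "mso_edge_lt I x y =
     Ex1 0 (Ex1 1 (mso_conj [Eq 0 x, Eq 1 y, Less 0 1, phi_edge I]))"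

definition mso_adj :: "mso_interp \<Rightarrow> nat \<Rightarrow> nat \<Rightarrow> nat mso" where
  "mso_adj I x y = Disj (mso_edge_lt I x y) (mso_edge_lt I y x)"

lemma sat_mso_vertex:
  assumes "wf_interp I" and "x \<ge> 2"
  shows "sat w fe se (mso_vertex I x) \<longleftrightarrow> fe x \<in> interp_verts I w"
proof -
  have "sat w (fe(0 := fe x)) se (phi_dom I) \<longleftrightarrow> sat w ((\<lambda>_. 0)(0 := fe x)) (\<lambda>_. {}) (phi_dom I)"
    using assms(1) by (intro sat_cong_free_vars) (auto simp: wf_interp_def)
  then show ?thesis using assms(2) by (auto simp: mso_vertex_def interp_verts_def)
qed

lemma sat_mso_adj:
  assumes "wf_interp I" and "x \<ge> 2" and "y \<ge> 2"
    and "fe x \<in> interp_verts I w" and "fe y \<in> interp_verts I w"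
  shows "sat w fe se (mso_adj I x y) \<longleftrightarrow> {fe x, fe y} \<in> snd (apply_interp I w)"
proof -
  have edge: "sat w fe se (mso_edge_lt I x y) \<longleftrightarrow> fe x < length w \<and> fe y < length w \<and> fe x < fe y \<and>
      sat w ((\<lambda>_. 0)(0 := fe x, 1 := fe y)) (\<lambda>_. {}) (phi_edge I)" if "x \<ge> 2" "y \<ge> 2" for x y
  proof -
    have "sat w (fe(0 := fe x, 1 := fe y)) se (phi_edge I) \<longleftrightarrow>
        sat w ((\<lambda>_. 0)(0 := fe x, 1 := fe y)) (\<lambda>_. {}) (phi_edge I)"
      using assms(1) by (intro sat_cong_free_vars) (auto simp: wf_interp_def)
    then show ?thesis using that by (auto simp: mso_edge_lt_def)
  qed
  show ?thesis
    using assms(4,5) edge[OF assms(2,3)] edge[OF assms(3,2)] edge_apply_interp_iff[OF assms(4,5)]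
    by (auto simp: mso_adj_def interp_verts_def)
qed

text \<open>Vertex \<open>v\<close> of the pattern graph \<open>F\<close> is represented by the variable \<open>v + 2\<close>.\<close>

definition mso_pair_as_in :: "mso_interp \<Rightarrow> graph \<Rightarrow> nat \<Rightarrow> nat \<Rightarrow> nat mso" where
  "mso_pair_as_in I F u v = mso_and (Neg (Eq (u + 2) (v + 2)))
     (if {u, v} \<in> snd F then mso_adj I (u + 2) (v + 2) else Neg (mso_adj I (u + 2) (v + 2)))"

definition mso_induced_copy :: "mso_interp \<Rightarrow> graph \<Rightarrow> nat mso" where
  "mso_induced_copy I F = (let vs = sorted_list_of_set (fst F) in
     mso_conj (map (\<lambda>v. mso_vertex I (v + 2)) vs @
       [mso_pair_as_in I F u v. u \<leftarrow> vs, v \<leftarrow> vs, u \<noteq> v]))"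

definition mso_has_induced :: "mso_interp \<Rightarrow> graph \<Rightarrow> nat mso" where
  "mso_has_induced I F =
     foldr Ex1 (map (\<lambda>v. v + 2) (sorted_list_of_set (fst F))) (mso_induced_copy I F)"

lemma sat_mso_induced_copy:
  assumes I: "wf_interp I" and F: "finite (fst F)"
  shows "sat w fe se (mso_induced_copy I F) \<longleftrightarrow> (\<forall>v\<in>fst F. fe (v + 2) \<in> interp_verts I w) \<and>
    (\<forall>u\<in>fst F. \<forall>v\<in>fst F. u \<noteq> v \<longrightarrow> fe (u + 2) \<noteq> fe (v + 2) \<and>
       ({fe (u + 2), fe (v + 2)} \<in> snd (apply_interp I w) \<longleftrightarrow> {u, v} \<in> snd F))"
proof -
  have "sat w fe se (mso_induced_copy I F) \<longleftrightarrow>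
      (\<forall>v\<in>fst F. sat w fe se (mso_vertex I (v + 2))) \<and>
      (\<forall>u\<in>fst F. \<forall>v\<in>fst F. u \<noteq> v \<longrightarrow> sat w fe se (mso_pair_as_in I F u v))"
    using F by (auto simp: mso_induced_copy_def Let_def)
  moreover have "sat w fe se (mso_pair_as_in I F u v) \<longleftrightarrow> fe (u + 2) \<noteq> fe (v + 2) \<and>
      ({fe (u + 2), fe (v + 2)} \<in> snd (apply_interp I w) \<longleftrightarrow> {u, v} \<in> snd F)"
    if "fe (u + 2) \<in> interp_verts I w" "fe (v + 2) \<in> interp_verts I w" for u v
    using sat_mso_adj[of I "u + 2" "v + 2", OF I _ _ that] by (simp add: mso_pair_as_in_def)
  ultimately show ?thesis
    using sat_mso_vertex[OF I] by auto
qed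

lemma sat_mso_has_induced:
  assumes I: "wf_interp I" and F: "is_graph F"
  shows "sat w fe se (mso_has_induced I F) \<longleftrightarrow> induced_sub F (apply_interp I w)"
proof -
  have fin: "finite (fst F)" using F by (simp add: is_graph_def)
  let ?V = "interp_verts I w" and ?E = "snd (apply_interp I w)" and ?S = "(\<lambda>v. v + 2) ` fst F"
  let ?emb = "\<lambda>h. (\<forall>v\<in>fst F. h v \<in> ?V) \<and>
    (\<forall>u\<in>fst F. \<forall>v\<in>fst F. u \<noteq> v \<longrightarrow> h u \<noteq> h v \<and> ({h u, h v} \<in> ?E \<longleftrightarrow> {u, v} \<in> snd F))"
  have override: "override_on fe g ?S (v + 2) = g (v + 2)" if "v \<in> fst F" for g v
    using that by (simp add: override_on_def)
  have "sat w fe se (mso_has_induced I F) \<longleftrightarrow>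
      (\<exists>g. (\<forall>x\<in>?S. g x < length w) \<and> sat w (override_on fe g ?S) se (mso_induced_copy I F))"
    using fin by (simp add: mso_has_induced_def sat_foldr_Ex1)
  also have "\<dots> \<longleftrightarrow> (\<exists>g. ?emb (\<lambda>v. g (v + 2)))"
    by (simp add: sat_mso_induced_copy[OF I fin] override cong: ball_cong)
      (auto simp: interp_verts_def)
  also have "\<dots> \<longleftrightarrow> (\<exists>h. ?emb h)"
  proof
    assume "\<exists>g. ?emb (\<lambda>v. g (v + 2))"
    then obtain g where "?emb (\<lambda>v. g (v + 2))" ..
    then show "\<exists>h. ?emb h" by (rule exI[where x = "\<lambda>v. g (v + 2)"])
  next
    assume "\<exists>h. ?emb h"
    then obtain h where "?emb h" ..
    then have "?emb (\<lambda>v. (\<lambda>x. h (x - 2)) (v + 2))" by simp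
    then show "\<exists>g. ?emb (\<lambda>v. g (v + 2))" by (rule exI[where x = "\<lambda>x. h (x - 2)"])
  qed
  also have "\<dots> \<longleftrightarrow> induced_sub F (apply_interp I w)"
    using induced_sub_iff_injective_on_pairs[OF F is_graph_apply_interp]
    by (simp add: apply_interp_def)
  finally show ?thesis .
qed

lemma fv_mso_has_induced:
  assumes I: "wf_interp I" and F: "finite (fst F)"
  shows "fv1 (mso_has_induced I F) = {}" and "fv2 (mso_has_induced I F) = {}"
proof -
  have vertex: "fv1 (mso_vertex I x) \<subseteq> {x}" "fv2 (mso_vertex I x) = {}" for x
    using I by (auto simp: mso_vertex_def wf_interp_def)
  have adj: "fv1 (mso_adj I x y) \<subseteq> {x, y}" "fv2 (mso_adj I x y) = {}" for x y
    using I by (auto simp: mso_adj_def mso_edge_lt_def wf_interp_def)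
  have pair: "fv1 (mso_pair_as_in I F u v) \<subseteq> {u + 2, v + 2}" "fv2 (mso_pair_as_in I F u v) = {}" for u v
    using adj[of "u + 2" "v + 2"] by (auto simp: mso_pair_as_in_def)
  have "fv1 (mso_induced_copy I F) \<subseteq> (\<lambda>v. v + 2) ` fst F"
    using F by (auto simp: mso_induced_copy_def Let_def
        dest!: vertex(1)[THEN subsetD] pair(1)[THEN subsetD] simp del: fv1.simps)
  then show "fv1 (mso_has_induced I F) = {}"
    using F by (auto simp: mso_has_induced_def fv_foldr_Ex1)
  show "fv2 (mso_has_induced I F) = {}"
    using F vertex(2) pair(2) by (simp add: mso_has_induced_def fv_foldr_Ex1 mso_induced_copy_def Let_def)
qed

lemma interp_excluding_induced_subgraphs:
  assumes I: "wf_interp I" and Fs: "\<forall>F\<in>set Fs. is_graph F"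
  shows "\<exists>J. wf_interp J \<and> Im J = {H \<in> Im I. \<forall>F\<in>set Fs. \<not> induced_sub F H}"
proof -
  define J where
    "J = I\<lparr>phi_Delta := mso_conj (phi_Delta I # map (\<lambda>F. Neg (mso_has_induced I F)) Fs)\<rparr>"
  have "apply_interp J w = apply_interp I w" for w
    by (simp add: J_def apply_interp_def interp_verts_def)
  moreover have "sat w fe se (phi_Delta J) \<longleftrightarrow>
      sat w fe se (phi_Delta I) \<and> (\<forall>F\<in>set Fs. \<not> induced_sub F (apply_interp I w))" for w fe se
    using sat_mso_has_induced[OF I] Fs by (auto simp: J_def)
  ultimately have "Im J = {H \<in> Im I. \<forall>F\<in>set Fs. \<not> induced_sub F H}"
    by (auto simp: Im_def J_def)
  moreover have "wf_interp J"
    using I fv_mso_has_induced[OF I] Fs by (auto simp: J_def wf_interp_def is_graph_def)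
  ultimately show ?thesis by blast
qed

lemma subclass_iso_excluding_outside:
  assumes "hereditary C" and "subclass_iso C D" and "\<forall>F\<in>set Fs. is_graph F \<and> F \<notin> C"
  shows "subclass_iso C {H \<in> D. \<forall>F\<in>set Fs. \<not> induced_sub F H}"
  unfolding subclass_iso_def
proof
  fix G assume "G \<in> C"
  then obtain H where H: "H \<in> D" "graph_iso G H"
    using assms(2) unfolding subclass_iso_def by blast
  have "\<not> induced_sub F H" if F: "F \<in> set Fs" for F
  proof
    assume "induced_sub F H"
    then have "induced_sub F G" using induced_sub_trans graph_iso_imp_induced_sub[OF H(2)] by blast
    then show False using \<open>G \<in> C\<close> assms(1,3) F unfolding hereditary_def by blast
  qed
  with H show "\<exists>H\<in>{H \<in> D. \<forall>F\<in>set Fs. \<not> induced_sub F H}. graph_iso G H" by blast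
qed

theorem lemma2p2:
  fixes C :: "graph set"
  assumes "\<forall>G\<in>C. is_graph G"
    and "hereditary C"
    and "bounded_lcw C"
    and "k_wqo 2 C"
  shows "\<exists>I. wf_interp I \<and> subclass_iso C (Im I) \<and> Im I \<subseteq> hered_closure C"
proof -
  obtain I where I: "wf_interp I" and C_Im: "subclass_iso C (Im I)"
    using assms(3) unfolding bounded_lcw_def by blast
  obtain Fs where Fs_out: "\<forall>F\<in>set Fs. is_graph F \<and> F \<notin> C"
    and Fs_obstruct: "\<forall>G. is_graph G \<and> G \<notin> C \<longrightarrow> (\<exists>F\<in>set Fs. induced_sub F G)"
    using finite_obstruction_list[OF assms(4)] by blast
  obtain J where J: "wf_interp J" and Im_J: "Im J = {H \<in> Im I. \<forall>F\<in>set Fs. \<not> induced_sub F H}"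
    using interp_excluding_induced_subgraphs[OF I] Fs_out by blast
  have "subclass_iso C (Im J)"
    unfolding Im_J using subclass_iso_excluding_outside[OF assms(2) C_Im Fs_out] .
  moreover have "H \<in> hered_closure C" if "H \<in> Im J" for H
  proof -
    have "H \<in> Im I" and "\<forall>F\<in>set Fs. \<not> induced_sub F H"
      using that unfolding Im_J by auto
    with is_graph_Im show ?thesis
      using Fs_obstruct induced_sub_refl unfolding hered_closure_def by blast
  qed
  ultimately show ?thesis using J by blast
qed

end
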